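(* Let $P_1,P_2$ be distinct points of $\mathrm{PG}(6,q)$ and let $E_1,E_2,E_3$ be planes such that $E_i\cap E_j=P_1$ and $P_2\notin\langle E_i,E_j\rangle$ for all distinct $i,j\in\{1,2,3\}$. Let $\mathcal{S}$ be the set of all solids $S$ of $\mathrm{PG}(6,q)$ with $P_2\in S$ and $S\cap E_i\neq\emptyset$ for all $i\in\{1,2,3\}$. Then $|\mathcal{S}|\le 3q^6+6q^5+7q^4+4q^3+2q^2+q+1$.
   Context: Dimensions are projective (planes 2, solids 3); $\langle\cdot\rangle$ denotes the span. *)

theory Defs
  imports "HOL-Analysis.Analysis"
begin

text \<open>PG(6,q) is modelled as the lattice of linear subspaces of the vector space
  F^7 over a finite field F with q = CARD(F) elements.  A projective subspace of
  projective dimension k is a linear subspace of (vector-space) dimension k+1.\<close>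

definition proj_subspace :: "nat \<Rightarrow> ('a::field ^ 7) set \<Rightarrow> bool" where
  "proj_subspace k U \<longleftrightarrow> vec.subspace U \<and> vec.dim U = k + 1"

abbreviation pg_point :: "('a::field ^ 7) set \<Rightarrow> bool" where
  "pg_point U \<equiv> proj_subspace 0 U"

abbreviation pg_plane :: "('a::field ^ 7) set \<Rightarrow> bool" where
  "pg_plane U \<equiv> proj_subspace 2 U"

abbreviation pg_solid :: "('a::field ^ 7) set \<Rightarrow> bool" where
  "pg_solid U \<equiv> proj_subspace 3 U"

definition pg_join :: "('a::field ^ 7) set \<Rightarrow> ('a ^ 7) set \<Rightarrow> ('a ^ 7) set" where
  "pg_join U V = vec.span (U \<union> V)"

definition pg_meet :: "('a::field ^ 7) set \<Rightarrow> ('a ^ 7) set \<Rightarrow> bool" where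
  "pg_meet U V \<longleftrightarrow> U \<inter> V \<noteq> {0}"

end

theory Submission
  imports Defs
begin

text \<open>Split the solids S according to whether they contain P1. Those that do contain the
  line P1P2, and they correspond to the lines of a complementary subspace of projective
  dimension 4, of which there are q^6 + q^5 + 2q^4 + 2q^3 + 2q^2 + q + 1. A solid S avoiding P1
  meets each E_i in a point B_i \<noteq> P1 and contains the plane \<langle>P2, B1, B2\<rangle>. Unless the
  triple is degenerate, i.e. B3 lies in this plane, S = \<langle>B3, P2, B1, B2\<rangle>; otherwise S is
  one of the q^3 + q^2 + q + 1 solids through the plane. Of the (q^2 + q)^3 triples at most
  (q^2 + q) q are degenerate, which gives the bound.\<close>

lemma span_Un_subspaces:
  fixes U W :: "('a::field ^ 'n) set"
  assumes "vec.subspace U" "vec.subspace W"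
  shows "vec.span (U \<union> W) = {x + y |x y. x \<in> U \<and> y \<in> W}"
  using assms by (simp add: vec.span_Un vec.span_eq_iff[THEN iffD2])

lemma dim_span_Un_add_dim_Int:
  fixes U W :: "('a::field ^ 'n) set"
  assumes "vec.subspace U" "vec.subspace W"
  shows "vec.dim (vec.span (U \<union> W)) + vec.dim (U \<inter> W) = vec.dim U + vec.dim W"
  using vec.dim_sums_Int[OF assms] span_Un_subspaces[OF assms] by simp

lemma dim_span_Un_disjoint:
  fixes U W :: "('a::field ^ 'n) set"
  assumes "vec.subspace U" "vec.subspace W" "U \<inter> W = {0}"
  shows "vec.dim (vec.span (U \<union> W)) = vec.dim U + vec.dim W"
  using dim_span_Un_add_dim_Int[OF assms(1,2)] assms(3) by simp

lemma dim1_Int_eq_zero: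
  fixes X W :: "('a::field ^ 'n) set"
  assumes "vec.subspace X" "vec.dim X = 1" "vec.subspace W" "\<not> X \<subseteq> W"
  shows "X \<inter> W = {0}"
proof -
  have "X \<inter> W \<noteq> X" using assms(4) by blast
  then have "vec.dim (X \<inter> W) < vec.dim X"
    using vec.subspace_dim_equal[of "X \<inter> W" X] vec.subspace_inter[OF assms(1,3)] assms(1)
    by (metis Int_lower1 not_less)
  then have "X \<inter> W \<subseteq> {0}" using assms(2) by simp
  then show ?thesis using vec.subspace_0[OF assms(1)] vec.subspace_0[OF assms(3)] by blast
qed

lemma dim_span_Un_dim1:
  fixes X W :: "('a::field ^ 'n) set"
  assumes "vec.subspace X" "vec.dim X = 1" "vec.subspace W" "\<not> X \<subseteq> W"
  shows "vec.dim (vec.span (X \<union> W)) = vec.dim W + 1"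
  using dim_span_Un_disjoint[OF assms(1,3) dim1_Int_eq_zero[OF assms]] assms(2) by simp

lemma dim1_subset_eq:
  fixes X Y :: "('a::field ^ 'n) set"
  assumes "vec.subspace X" "vec.dim X = 1" "vec.subspace Y" "vec.dim Y = 1" "X \<subseteq> Y"
  shows "X = Y"
  using assms by (metis vec.subspace_dim_equal order_refl)

lemma subspace_complement_exists:
  fixes T :: "('a::field ^ 'n) set"
  assumes "vec.subspace T"
  obtains C where "vec.subspace C" "T \<inter> C = {0}" "vec.span (T \<union> C) = UNIV"
proof -
  obtain B where B: "B \<subseteq> T" "vec.independent B" "T \<subseteq> vec.span B" "card B = vec.dim T"
    using vec.basis_exists by blast
  define B' where "B' = vec.extend_basis B"
  have B': "B \<subseteq> B'" "vec.independent B'" "vec.span B' = UNIV"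
    using vec.extend_basis_superset vec.independent_extend_basis vec.span_extend_basis B(2)
    unfolding B'_def by auto
  have "finite B'" using vec.finiteI_independent[OF B'(2)] .
  define C where "C = vec.span (B' - B)"
  have C: "vec.subspace C" unfolding C_def by simp
  have "B' \<subseteq> T \<union> C" using B(1) vec.span_superset[of "B' - B"] unfolding C_def by blast
  then have span_UNIV: "vec.span (T \<union> C) = UNIV"
    using vec.span_mono B'(3) by blast
  have "card B' = CARD('n)"
    using vec.dim_eq_card_independent[OF B'(2)] vec.dim_span[of B'] B'(3)
    by (simp add: card_cart_basis)
  then have "vec.dim C \<le> CARD('n) - vec.dim T"
    using vec.dim_le_card[of C "B' - B"] B'(1) \<open>finite B'\<close> B(4) unfolding C_def
    by (simp add: card_Diff_subset finite_subset)
  moreover have "vec.dim T \<le> CARD('n)"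
    using vec.dim_subset_UNIV[of T] by (simp add: vec.dimension_def card_cart_basis)
  moreover have "vec.dim (vec.span (T \<union> C)) = CARD('n)"
    by (simp add: span_UNIV card_cart_basis)
  ultimately have "vec.dim (T \<inter> C) = 0"
    using dim_span_Un_add_dim_Int[OF assms C] by linarith
  then have "T \<inter> C = {0}" using vec.subspace_0[OF assms] vec.subspace_0[OF C] by auto
  then show ?thesis using that C span_UNIV by blast
qed

lemma subspace_eq_span_Un_Int_complement:
  fixes T C S :: "('a::field ^ 'n) set"
  assumes "vec.subspace T" "vec.subspace C" "vec.span (T \<union> C) = UNIV"
    and "vec.subspace S" "T \<subseteq> S"
  shows "S = vec.span (T \<union> (S \<inter> C))"
proof
  show "S \<subseteq> vec.span (T \<union> (S \<inter> C))"
  proof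
    fix s assume s: "s \<in> S"
    obtain t c where tc: "s = t + c" "t \<in> T" "c \<in> C"
      using span_Un_subspaces[OF assms(1,2)] assms(3) by blast
    have "c = s - t" using tc by simp
    then have "c \<in> S" using s tc(2) assms(4,5) vec.subspace_diff by blast
    then show "s \<in> vec.span (T \<union> (S \<inter> C))"
      using tc by (auto intro: vec.span_add vec.span_base)
  qed
  show "vec.span (T \<union> (S \<inter> C)) \<subseteq> S" by (rule vec.span_minimal) (use assms in auto)
qed

lemma span_insert_eq_image:
  fixes b :: "'a::field ^ 'n"
  shows "vec.span (insert b B) = (\<lambda>(c, u). c *s b + u) ` (UNIV \<times> vec.span B)"
proof
  show "vec.span (insert b B) \<subseteq> (\<lambda>(c, u). c *s b + u) ` (UNIV \<times> vec.span B)"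
  proof
    fix x assume "x \<in> vec.span (insert b B)"
    then obtain k where "x - k *s b \<in> vec.span B" using vec.span_insert by blast
    then show "x \<in> (\<lambda>(c, u). c *s b + u) ` (UNIV \<times> vec.span B)"
      by (intro image_eqI[of _ _ "(k, x - k *s b)"]) auto
  qed
  show "(\<lambda>(c, u). c *s b + u) ` (UNIV \<times> vec.span B) \<subseteq> vec.span (insert b B)"
    by (auto intro!: vec.span_add vec.span_scale simp: vec.span_base)
      (meson subsetD subset_insertI vec.span_mono)
qed

lemma inj_on_scale_add_span:
  fixes b :: "'a::field ^ 'n"
  assumes "b \<notin> vec.span B"
  shows "inj_on (\<lambda>(c, u). c *s b + u) (UNIV \<times> vec.span B)"
proof (rule inj_onI, clarsimp)
  fix c u c' u'
  assume u: "u \<in> vec.span B" "u' \<in> vec.span B" and eq: "c *s b + u = c' *s b + u'"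
  have "(c - c') *s b = u' - u" using eq by (simp add: algebra_simps vec.scale_left_diff_distrib)
  then have diff_in: "(c - c') *s b \<in> vec.span B" using vec.span_diff[OF u(2,1)] by simp
  have "c = c'"
  proof (rule ccontr)
    assume "c \<noteq> c'"
    then have "b = inverse (c - c') *s ((c - c') *s b)"
      by (simp del: vec.scale_right_diff_distrib vector_sub_rdistrib)
    then show False using assms vec.span_scale[OF diff_in] by metis
  qed
  then show "c = c' \<and> u = u'" using eq by simp
qed

lemma card_span_independent:
  fixes B :: "('a::{finite,field} ^ 'n) set"
  assumes "vec.independent B"
  shows "card (vec.span B) = CARD('a) ^ card B"
proof -
  have "finite B" using vec.finiteI_independent assms by blast
  then show ?thesis using assms
  proof (induction B rule: finite_induct)
    case empty then show ?case by simp
  next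
    case (insert b B)
    have "vec.independent B" using insert.prems vec.independent_mono by blast
    moreover have "b \<notin> vec.span B" using insert.prems insert.hyps vec.independent_insert by metis
    then have "card (vec.span (insert b B)) = card ((UNIV :: 'a set) \<times> vec.span B)"
      unfolding span_insert_eq_image by (rule card_image[OF inj_on_scale_add_span])
    ultimately show ?case using insert by (simp add: card_cartesian_product)
  qed
qed

lemma card_subspace:
  fixes U :: "('a::{finite,field} ^ 'n) set"
  assumes "vec.subspace U"
  shows "card U = CARD('a) ^ vec.dim U"
proof -
  obtain B where "B \<subseteq> U" "vec.independent B" "U \<subseteq> vec.span B" "card B = vec.dim U"
    using vec.basis_exists by blast
  then show ?thesis using card_span_independent assms vec.span_subspace by metis
qed

text \<open>Here k is the vector-space dimension, so the points and lines of U are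
  subspaces_of_dim 1 U and subspaces_of_dim 2 U.\<close>

definition subspaces_of_dim :: "nat \<Rightarrow> ('a::field ^ 'n) set \<Rightarrow> ('a ^ 'n) set set" where
  "subspaces_of_dim k U = {X. vec.subspace X \<and> vec.dim X = k \<and> X \<subseteq> U}"

lemma two_le_card_field: "2 \<le> CARD('a::{finite,field})"
proof -
  have "card {0::'a, 1} \<le> CARD('a)" by (rule card_mono) auto
  then show ?thesis by simp
qed

lemma geometric_sum_nat:
  fixes q :: nat
  assumes "1 \<le> q"
  shows "(\<Sum>i<k. q ^ i) * (q - 1) + 1 = q ^ k"
proof (induction k)
  case 0 then show ?case by simp
next
  case (Suc k)
  have "(\<Sum>i<Suc k. q ^ i) * (q - 1) + 1 = ((\<Sum>i<k. q ^ i) * (q - 1) + 1) + q ^ k * (q - 1)"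
    by (simp add: algebra_simps)
  also have "\<dots> = q ^ Suc k" using Suc assms by (simp add: algebra_simps)
  finally show ?case .
qed

lemma card_points_mult:
  fixes U :: "('a::{finite,field} ^ 'n) set"
  assumes "vec.subspace U"
  shows "card (subspaces_of_dim 1 U) * (CARD('a) - 1) + 1 = CARD('a) ^ vec.dim U"
proof -
  let ?P = "subspaces_of_dim 1 U"
  have cover: "U - {0} = (\<Union>X\<in>?P. X - {0})"
  proof
    show "U - {0} \<subseteq> (\<Union>X\<in>?P. X - {0})"
    proof
      fix u assume u: "u \<in> U - {0}"
      then have "vec.span {u} \<in> ?P"
        using assms by (simp add: subspaces_of_dim_def vec.span_minimal)
      moreover have "u \<in> vec.span {u} - {0}" using u vec.span_base[of u "{u}"] by simp
      ultimately show "u \<in> (\<Union>X\<in>?P. X - {0})" by blast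
    qed
  qed (auto simp: subspaces_of_dim_def)
  have disjoint: "(X - {0}) \<inter> (Y - {0}) = {}" if "X \<in> ?P" "Y \<in> ?P" "X \<noteq> Y" for X Y
    using that dim1_Int_eq_zero[of X Y] dim1_subset_eq[of X Y] by (auto simp: subspaces_of_dim_def)
  have "card (U - {0}) = (\<Sum>X\<in>?P. card (X - {0}))"
    unfolding cover by (rule card_UN_disjoint) (auto simp: disjoint)
  also have "\<dots> = (\<Sum>X\<in>?P. CARD('a) - 1)"
    by (rule sum.cong) (auto simp: subspaces_of_dim_def card_subspace vec.subspace_0)
  finally have "card (U - {0}) = card ?P * (CARD('a) - 1)" by simp
  moreover have "card (U - {0}) + 1 = card U"
    using vec.subspace_0[OF assms] by (metis card_Suc_Diff1 finite Suc_eq_plus1)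
  ultimately show ?thesis using card_subspace[OF assms] by linarith
qed

lemma card_points:
  fixes U :: "('a::{finite,field} ^ 'n) set"
  assumes "vec.subspace U"
  shows "card (subspaces_of_dim 1 U) = (\<Sum>i<vec.dim U. CARD('a) ^ i)"
proof -
  have q: "2 \<le> CARD('a)" by (rule two_le_card_field)
  then have "card (subspaces_of_dim 1 U) * (CARD('a) - 1)
      = (\<Sum>i<vec.dim U. CARD('a) ^ i) * (CARD('a) - 1)"
    using card_points_mult[OF assms] geometric_sum_nat[of "CARD('a)" "vec.dim U"] by linarith
  then show ?thesis using q by simp
qed

lemma card_off_diagonal:
  assumes "finite A"
  shows "card {(x, y). x \<in> A \<and> y \<in> A \<and> x \<noteq> y} + card A = card A * card A"
proof -
  let ?D = "{(x, y). x \<in> A \<and> y \<in> A \<and> x \<noteq> y}"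
  have "card A * card A = card (A \<times> A)" by (simp add: card_cartesian_product)
  also have "A \<times> A = ?D \<union> (\<lambda>x. (x, x)) ` A" by auto
  also have "card \<dots> = card ?D + card ((\<lambda>x. (x, x)) ` A)"
    by (rule card_Un_disjoint) (use assms in \<open>auto intro: finite_subset[of _ "A \<times> A"]\<close>)
  also have "card ((\<lambda>x. (x, x)) ` A) = card A" by (rule card_image) (auto simp: inj_on_def)
  finally show ?thesis by simp
qed

lemma dim_span_Un_dim1_dim1:
  fixes X Y :: "('a::field ^ 'n) set"
  assumes "vec.subspace X" "vec.dim X = 1" "vec.subspace Y" "vec.dim Y = 1" "X \<noteq> Y"
  shows "vec.dim (vec.span (X \<union> Y)) = 2"
proof -
  have "\<not> X \<subseteq> Y" using dim1_subset_eq assms by blast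
  then show ?thesis using dim_span_Un_dim1[OF assms(1-3)] assms(4) by simp
qed

lemma span_points_eq_line:
  fixes W :: "('a::field ^ 'n) set"
  assumes "vec.subspace W" "vec.dim W = 2"
    and "X \<in> subspaces_of_dim 1 W" "Y \<in> subspaces_of_dim 1 W" "X \<noteq> Y"
  shows "vec.span (X \<union> Y) = W"
proof -
  have "vec.span (X \<union> Y) \<subseteq> W" and "vec.dim (vec.span (X \<union> Y)) = 2"
    using assms dim_span_Un_dim1_dim1[of X Y] by (auto simp: subspaces_of_dim_def vec.span_minimal)
  then show ?thesis using assms(1,2) vec.subspace_dim_equal[of "vec.span (X \<union> Y)" W] by simp
qed

lemma card_lines_mult:
  fixes U :: "('a::{finite,field} ^ 'n) set"
  assumes "vec.subspace U"
  shows "card (subspaces_of_dim 2 U) * ((CARD('a) + 1) * CARD('a)) + card (subspaces_of_dim 1 U)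
    = card (subspaces_of_dim 1 U) * card (subspaces_of_dim 1 U)"
proof -
  define pairs where
    "pairs W = {(X, Y). X \<in> subspaces_of_dim 1 W \<and> Y \<in> subspaces_of_dim 1 W \<and> X \<noteq> Y}"
    for W :: "('a ^ 'n) set"
  have line_eq: "vec.span (X \<union> Y) = W" if "W \<in> subspaces_of_dim 2 U" "(X, Y) \<in> pairs W" for W X Y
    using that by (intro span_points_eq_line) (auto simp: pairs_def subspaces_of_dim_def)
  have cover: "pairs U = (\<Union>W\<in>subspaces_of_dim 2 U. pairs W)"
  proof
    show "pairs U \<subseteq> (\<Union>W\<in>subspaces_of_dim 2 U. pairs W)"
    proof clarify
      fix X Y assume XY: "(X, Y) \<in> pairs U"
      then have "vec.span (X \<union> Y) \<in> subspaces_of_dim 2 U"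
        using assms dim_span_Un_dim1_dim1[of X Y]
        by (auto simp: pairs_def subspaces_of_dim_def vec.span_minimal)
      moreover have "(X, Y) \<in> pairs (vec.span (X \<union> Y))"
        using XY vec.span_superset[of "X \<union> Y"] by (auto simp: pairs_def subspaces_of_dim_def)
      ultimately show "(X, Y) \<in> (\<Union>W\<in>subspaces_of_dim 2 U. pairs W)" by blast
    qed
  qed (auto simp: pairs_def subspaces_of_dim_def)
  have "card (pairs U) = (\<Sum>W\<in>subspaces_of_dim 2 U. card (pairs W))"
    unfolding cover
  proof (rule card_UN_disjoint)
    show "\<forall>W\<in>subspaces_of_dim 2 U. \<forall>W'\<in>subspaces_of_dim 2 U. W \<noteq> W' \<longrightarrow> pairs W \<inter> pairs W' = {}"
    proof (intro ballI impI equals0I)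
      fix W W' p
      assume "W \<in> subspaces_of_dim 2 U" "W' \<in> subspaces_of_dim 2 U" "W \<noteq> W'"
        and "p \<in> pairs W \<inter> pairs W'"
      then show False using line_eq[of W "fst p" "snd p"] line_eq[of W' "fst p" "snd p"] by simp
    qed
  qed auto
  also have "\<dots> = (\<Sum>W\<in>subspaces_of_dim 2 U. (CARD('a) + 1) * CARD('a))"
  proof (rule sum.cong)
    fix W assume "W \<in> subspaces_of_dim 2 U"
    then have "card (subspaces_of_dim 1 W) = CARD('a) + 1"
      using card_points[of W] by (simp add: subspaces_of_dim_def numeral_2_eq_2)
    then show "card (pairs W) = (CARD('a) + 1) * CARD('a)"
      using card_off_diagonal[of "subspaces_of_dim 1 W"] by (simp add: pairs_def algebra_simps)
  qed simp
  finally show ?thesis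
    using card_off_diagonal[of "subspaces_of_dim 1 U"] by (simp add: pairs_def)
qed

definition superspaces :: "nat \<Rightarrow> ('a::field ^ 'n) set \<Rightarrow> ('a ^ 'n) set set" where
  "superspaces k T = {S. vec.subspace S \<and> vec.dim S = vec.dim T + k \<and> T \<subseteq> S}"

lemma card_superspaces_le:
  fixes T :: "('a::{finite,field} ^ 'n) set"
  assumes "vec.subspace T"
  obtains C :: "('a ^ 'n) set" where "vec.subspace C" "vec.dim T + vec.dim C = CARD('n)"
    "card (superspaces k T) \<le> card (subspaces_of_dim k C)"
proof -
  obtain C where C: "vec.subspace C" "T \<inter> C = {0}" "vec.span (T \<union> C) = UNIV"
    using subspace_complement_exists[OF assms] by blast
  have "vec.dim T + vec.dim C = CARD('n)"
    using dim_span_Un_disjoint[OF assms C(1,2)] C(3) by (simp add: card_cart_basis)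
  moreover have "superspaces k T \<subseteq> (\<lambda>X. vec.span (T \<union> X)) ` subspaces_of_dim k C"
    unfolding superspaces_def
  proof clarify
    fix S assume S: "vec.subspace S" "vec.dim S = vec.dim T + k" "T \<subseteq> S"
    have S_eq: "S = vec.span (T \<union> (S \<inter> C))"
      by (rule subspace_eq_span_Un_Int_complement[OF assms C(1,3) S(1,3)])
    have "T \<inter> (S \<inter> C) = {0}" using C(2) vec.subspace_0[OF assms] S(3) by auto
    then have "vec.dim S = vec.dim T + vec.dim (S \<inter> C)"
      using dim_span_Un_disjoint[OF assms vec.subspace_inter[OF S(1) C(1)]] by (simp flip: S_eq)
    then have "S \<inter> C \<in> subspaces_of_dim k C"
      using S vec.subspace_inter[OF S(1) C(1)] by (simp add: subspaces_of_dim_def)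
    with S_eq show "S \<in> (\<lambda>X. vec.span (T \<union> X)) ` subspaces_of_dim k C" by (rule image_eqI)
  qed
  then have "card (superspaces k T) \<le> card (subspaces_of_dim k C)"
    by (meson card_image_le card_mono finite order_trans)
  ultimately show ?thesis using that[OF C(1)] by blast
qed

lemma card_superspaces_Suc_le:
  fixes T :: "('a::{finite,field} ^ 'n) set"
  assumes "vec.subspace T"
  shows "card (superspaces 1 T) \<le> (\<Sum>i<CARD('n) - vec.dim T. CARD('a) ^ i)"
proof -
  obtain C :: "('a ^ 'n) set" where C: "vec.subspace C" "vec.dim T + vec.dim C = CARD('n)"
    and le: "card (superspaces 1 T) \<le> card (subspaces_of_dim 1 C)"
    using card_superspaces_le[OF assms] .
  moreover have "vec.dim C = CARD('n) - vec.dim T" using C(2) by simp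
  ultimately show ?thesis using card_points[OF C(1)] by simp
qed

lemma card_lines_dim5:
  fixes U :: "('a::{finite,field} ^ 'n) set"
  assumes "vec.subspace U" "vec.dim U = 5"
  shows "card (subspaces_of_dim 2 U)
    = CARD('a)^6 + CARD('a)^5 + 2 * CARD('a)^4 + 2 * CARD('a)^3 + 2 * CARD('a)^2 + CARD('a) + 1"
    (is "_ = ?L")
proof -
  let ?q = "CARD('a)"
  let ?N = "1 + ?q + ?q^2 + ?q^3 + ?q^4"
  have "card (subspaces_of_dim 1 U) = ?N"
    using card_points[OF assms(1)] assms(2) by (simp add: numeral_eq_Suc)
  then have "card (subspaces_of_dim 2 U) * ((?q + 1) * ?q) + ?N = ?N * ?N"
    using card_lines_mult[OF assms(1)] by simp
  moreover have "?L * ((?q + 1) * ?q) + ?N = ?N * ?N" by algebra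
  ultimately have "card (subspaces_of_dim 2 U) * ((?q + 1) * ?q) = ?L * ((?q + 1) * ?q)" by linarith
  moreover have "(?q + 1) * ?q \<noteq> 0" using two_le_card_field[where 'a='a] by simp
  ultimately show ?thesis by (metis mult_right_cancel)
qed

lemma subspace_pg_join [simp]: "vec.subspace (pg_join U V)"
  by (simp add: pg_join_def)

lemma subset_pg_join1: "X \<subseteq> U \<Longrightarrow> X \<subseteq> pg_join U V"
  unfolding pg_join_def by (meson Un_upper1 vec.span_superset subset_trans)

lemma subset_pg_join2: "X \<subseteq> V \<Longrightarrow> X \<subseteq> pg_join U V"
  unfolding pg_join_def by (meson Un_upper2 vec.span_superset subset_trans)

lemmas subset_pg_joinI = subset_pg_join1 subset_pg_join2

lemma pg_join_subset_iff [simp]: "vec.subspace W \<Longrightarrow> pg_join U V \<subseteq> W \<longleftrightarrow> U \<subseteq> W \<and> V \<subseteq> W"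
  using vec.span_minimal[of "U \<union> V" W] vec.span_superset[of "U \<union> V"]
  unfolding pg_join_def by blast

lemma pg_join_mono: "U \<subseteq> U' \<Longrightarrow> V \<subseteq> V' \<Longrightarrow> pg_join U V \<subseteq> pg_join U' V'"
  unfolding pg_join_def by (intro vec.span_mono) blast

lemma dim_pg_join_add_dim_Int:
  "vec.subspace U \<Longrightarrow> vec.subspace V
    \<Longrightarrow> vec.dim (pg_join U V) + vec.dim (U \<inter> V) = vec.dim U + vec.dim V"
  unfolding pg_join_def by (rule dim_span_Un_add_dim_Int)

lemma dim_pg_join_point:
  assumes "pg_point X" "vec.subspace W" "\<not> X \<subseteq> W"
  shows "vec.dim (pg_join X W) = vec.dim W + 1"
  using dim_span_Un_dim1[of X W] assms by (simp add: pg_join_def proj_subspace_def)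

lemma pg_point_subset_eq: "pg_point X \<Longrightarrow> pg_point Y \<Longrightarrow> X \<subseteq> Y \<Longrightarrow> X = Y"
  using dim1_subset_eq[of X Y] by (simp add: proj_subspace_def)

lemma pg_meet_obtain_point:
  assumes "vec.subspace S" "vec.subspace U" "pg_meet S U"
  obtains B where "pg_point B" "B \<subseteq> S" "B \<subseteq> U"
proof -
  obtain v where v: "v \<in> S" "v \<in> U" "v \<noteq> 0"
    using assms(3) vec.subspace_0[OF assms(1)] vec.subspace_0[OF assms(2)]
    unfolding pg_meet_def by blast
  show ?thesis
    by (rule that[of "vec.span {v}"])
      (use v assms in \<open>simp_all add: proj_subspace_def vec.span_minimal\<close>)
qed

lemma pg_solid_eq_join:
  assumes "pg_solid S" "pg_plane T" "T \<subseteq> S" "pg_point B" "B \<subseteq> S" "\<not> B \<subseteq> T"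
  shows "S = pg_join B T"
proof -
  have "pg_join B T \<subseteq> S" using assms by (simp add: proj_subspace_def)
  moreover have "vec.dim (pg_join B T) = vec.dim S"
    using dim_pg_join_point[OF assms(4) _ assms(6)] assms(1,2) by (simp add: proj_subspace_def)
  ultimately show ?thesis
    using vec.subspace_dim_equal[of "pg_join B T" S] assms(1) by (simp add: proj_subspace_def)
qed

lemma card_solids_through_plane:
  fixes T :: "('a::{finite,field} ^ 7) set"
  assumes "pg_plane T"
  shows "card {S. pg_solid S \<and> T \<subseteq> S} \<le> CARD('a)^3 + CARD('a)^2 + CARD('a) + 1"
  using card_superspaces_Suc_le[of T] assms
  by (simp add: superspaces_def proj_subspace_def numeral_eq_Suc)

lemma card_solids_through_points:
  fixes P1 P2 :: "('a::{finite,field} ^ 7) set"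
  assumes "pg_point P1" "pg_point P2" "P1 \<noteq> P2"
  shows "card {S. pg_solid S \<and> P1 \<subseteq> S \<and> P2 \<subseteq> S}
    \<le> CARD('a)^6 + CARD('a)^5 + 2 * CARD('a)^4 + 2 * CARD('a)^3 + 2 * CARD('a)^2 + CARD('a) + 1"
proof -
  let ?L = "pg_join P1 P2"
  have "\<not> P1 \<subseteq> P2" using pg_point_subset_eq assms by blast
  then have dim_L: "vec.dim ?L = 2"
    using dim_pg_join_point[OF assms(1)] assms(2) by (simp add: proj_subspace_def)
  obtain C :: "('a ^ 7) set" where C: "vec.subspace C" "vec.dim ?L + vec.dim C = 7"
    and le: "card (superspaces 2 ?L) \<le> card (subspaces_of_dim 2 C)"
    using card_superspaces_le[of ?L 2] by auto
  have "{S. pg_solid S \<and> P1 \<subseteq> S \<and> P2 \<subseteq> S} = superspaces 2 ?L"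
    unfolding superspaces_def
  proof (rule Collect_cong)
    fix S
    show "pg_solid S \<and> P1 \<subseteq> S \<and> P2 \<subseteq> S \<longleftrightarrow> vec.subspace S \<and> vec.dim S = vec.dim ?L + 2 \<and> ?L \<subseteq> S"
      by (cases "vec.subspace S") (simp_all add: dim_L proj_subspace_def)
  qed
  then show ?thesis using le card_lines_dim5[OF C(1)] C(2) dim_L by simp
qed

locale three_planes =
  fixes P1 P2 :: "('a::{finite,field} ^ 7) set" and E :: "nat \<Rightarrow> ('a ^ 7) set"
  assumes P1: "pg_point P1" and P2: "pg_point P2"
    and plane: "\<And>i. i \<in> {1,2,3} \<Longrightarrow> pg_plane (E i)"
    and planes_meet: "\<And>i j. i \<in> {1,2,3} \<Longrightarrow> j \<in> {1,2,3} \<Longrightarrow> i \<noteq> j \<Longrightarrow> E i \<inter> E j = P1"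
    and P2_off_joins: "\<And>i j. i \<in> {1,2,3} \<Longrightarrow> j \<in> {1,2,3} \<Longrightarrow> i \<noteq> j \<Longrightarrow> \<not> P2 \<subseteq> pg_join (E i) (E j)"
begin

lemma subspace_E: "i \<in> {1,2,3} \<Longrightarrow> vec.subspace (E i)"
  using plane by (simp add: proj_subspace_def)

lemma dim_E: "i \<in> {1,2,3} \<Longrightarrow> vec.dim (E i) = 3"
  using plane by (simp add: proj_subspace_def)

lemma P1_subset_E: "i \<in> {1,2,3} \<Longrightarrow> P1 \<subseteq> E i"
  using planes_meet[of i "if i = 1 then 2 else 1"] by auto

definition off_points :: "nat \<Rightarrow> ('a ^ 7) set set" where
  "off_points i = {B. pg_point B \<and> B \<subseteq> E i \<and> B \<noteq> P1}"

definition triples :: "(('a ^ 7) set \<times> ('a ^ 7) set \<times> ('a ^ 7) set) set" where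
  "triples = off_points 1 \<times> off_points 2 \<times> off_points 3"

definition degenerate :: "(('a ^ 7) set \<times> ('a ^ 7) set \<times> ('a ^ 7) set) set" where
  "degenerate = {(B1, B2, B3) \<in> triples. B3 \<subseteq> pg_join P2 (pg_join B1 B2)}"

lemma card_off_points:
  assumes "i \<in> {1,2,3}"
  shows "card (off_points i) = CARD('a)^2 + CARD('a)"
proof -
  have "off_points i = subspaces_of_dim 1 (E i) - {P1}"
    by (auto simp: off_points_def subspaces_of_dim_def proj_subspace_def)
  moreover have "P1 \<in> subspaces_of_dim 1 (E i)"
    using P1 P1_subset_E[OF assms] by (simp add: subspaces_of_dim_def proj_subspace_def)
  moreover have "card (subspaces_of_dim 1 (E i)) = 1 + CARD('a) + CARD('a)^2"
    using card_points[OF subspace_E[OF assms]] dim_E[OF assms] by (simp add: numeral_eq_Suc)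
  ultimately show ?thesis by (simp add: card_Diff_singleton)
qed

lemma card_triples: "card triples = (CARD('a)^2 + CARD('a))^3"
  by (simp add: triples_def card_cartesian_product card_off_points power3_eq_cube)

lemma off_point_not_subset:
  assumes "i \<in> {1,2,3}" "j \<in> {1,2,3}" "i \<noteq> j" "B \<in> off_points i"
  shows "\<not> B \<subseteq> E j"
proof
  assume "B \<subseteq> E j"
  then have "B \<subseteq> P1" using assms(4) planes_meet[OF assms(1-3)] by (auto simp: off_points_def)
  then show False using pg_point_subset_eq[OF _ P1] assms(4) unfolding off_points_def by blast
qed

lemma dim_join_off_points:
  assumes "i \<in> {1,2,3}" "j \<in> {1,2,3}" "i \<noteq> j" "B \<in> off_points i" "C \<in> off_points j"
  shows "vec.dim (pg_join P2 (pg_join B C)) = 3"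
proof -
  have B: "pg_point B" "B \<subseteq> E i" and C: "pg_point C" "C \<subseteq> E j"
    using assms(4,5) by (auto simp: off_points_def)
  have "\<not> B \<subseteq> C" using off_point_not_subset[OF assms(1-4)] C(2) by blast
  then have "vec.dim (pg_join B C) = 2"
    using dim_pg_join_point[OF B(1)] C(1) by (simp add: proj_subspace_def)
  moreover have "\<not> P2 \<subseteq> pg_join B C"
    using P2_off_joins[OF assms(1-3)] pg_join_mono[OF B(2) C(2)] by blast
  ultimately show ?thesis using dim_pg_join_point[OF P2] by simp
qed

lemma join_off_points_plane:
  "i \<in> {1,2,3} \<Longrightarrow> j \<in> {1,2,3} \<Longrightarrow> i \<noteq> j \<Longrightarrow> B \<in> off_points i \<Longrightarrow> C \<in> off_points j
    \<Longrightarrow> pg_plane (pg_join P2 (pg_join B C))"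
  using dim_join_off_points by (simp add: proj_subspace_def)

lemma dim_join_off_points_line:
  assumes "i \<in> {1,2,3}" "j \<in> {1,2,3}" "i \<noteq> j"
    and "B \<in> off_points i" "C \<in> off_points j" "C' \<in> off_points j" "C \<noteq> C'"
  shows "vec.dim (pg_join P2 (pg_join B (pg_join C C'))) = 4"
proof -
  have pts: "pg_point B" "pg_point C" "pg_point C'"
    using assms(4-6) by (auto simp: off_points_def)
  let ?L = "pg_join C C'"
  have "\<not> C \<subseteq> C'" using pg_point_subset_eq pts assms(7) by blast
  then have dim_L: "vec.dim ?L = 2"
    using dim_pg_join_point[OF pts(2)] pts(3) by (simp add: proj_subspace_def)
  have L_E: "?L \<subseteq> E j"
    using assms(2,5,6) subspace_E by (auto simp: off_points_def)
  then have "\<not> B \<subseteq> ?L" using off_point_not_subset[OF assms(1-4)] by auto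
  then have dim_BL: "vec.dim (pg_join B ?L) = 3" using dim_pg_join_point[OF pts(1)] dim_L by simp
  have "pg_join B ?L \<subseteq> pg_join (E i) (E j)"
    using assms(4) L_E by (intro pg_join_mono) (auto simp: off_points_def)
  then have "\<not> P2 \<subseteq> pg_join B ?L" using P2_off_joins[OF assms(1-3)] by blast
  then show ?thesis using dim_pg_join_point[OF P2] dim_BL by simp
qed

lemma degenerate_determined:
  assumes "(B1, B2, B3) \<in> degenerate" "(B1, B2', B3) \<in> degenerate"
  shows "B2 = B2'"
proof (rule ccontr)
  assume "B2 \<noteq> B2'"
  have B: "B1 \<in> off_points 1" "B2 \<in> off_points 2" "B2' \<in> off_points 2" "B3 \<in> off_points 3"
    using assms by (auto simp: degenerate_def triples_def)
  let ?T = "pg_join P2 (pg_join B1 B2)" and ?T' = "pg_join P2 (pg_join B1 B2')"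
    and ?T13 = "pg_join P2 (pg_join B1 B3)"
  have "B3 \<subseteq> ?T" "B3 \<subseteq> ?T'" using assms by (auto simp: degenerate_def)
  then have sub: "?T13 \<subseteq> ?T" "?T13 \<subseteq> ?T'" by (simp_all add: subset_pg_joinI)
  have dim: "vec.dim ?T13 = 3" "vec.dim ?T = 3" "vec.dim ?T' = 3"
    using dim_join_off_points[of 1 3 B1 B3] dim_join_off_points[of 1 2 B1 B2]
      dim_join_off_points[of 1 2 B1 B2'] B by simp_all
  have "?T13 = ?T" "?T13 = ?T'"
    using vec.subspace_dim_equal[OF subspace_pg_join subspace_pg_join sub(1)]
      vec.subspace_dim_equal[OF subspace_pg_join subspace_pg_join sub(2)] dim by simp_all
  then have "B2' \<subseteq> ?T" by (metis subset_pg_joinI order_refl)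
  then have "pg_join P2 (pg_join B1 (pg_join B2 B2')) \<subseteq> ?T" by (simp add: subset_pg_joinI)
  then have "vec.dim (pg_join P2 (pg_join B1 (pg_join B2 B2'))) \<le> 3"
    using vec.dim_subset dim(2) by metis
  then show False using dim_join_off_points_line[of 1 2 B1 B2 B2'] B \<open>B2 \<noteq> B2'\<close> by simp
qed

lemma degenerate_first_in_join:
  assumes "(B1, B2, B3) \<in> degenerate"
  shows "B1 \<subseteq> pg_join P2 (pg_join (E 2) B3)"
proof -
  have B: "B1 \<in> off_points 1" "B2 \<in> off_points 2" "B3 \<in> off_points 3"
    using assms by (auto simp: degenerate_def triples_def)
  let ?T = "pg_join P2 (pg_join B1 B2)" and ?T23 = "pg_join P2 (pg_join B2 B3)"
  have sub: "?T23 \<subseteq> ?T"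
    using assms by (simp add: degenerate_def subset_pg_joinI)
  have "vec.dim ?T23 = 3" "vec.dim ?T = 3"
    using dim_join_off_points[of 2 3 B2 B3] dim_join_off_points[of 1 2 B1 B2] B by simp_all
  then have "?T23 = ?T"
    using vec.subspace_dim_equal[OF subspace_pg_join subspace_pg_join sub] by simp
  moreover have "?T23 \<subseteq> pg_join P2 (pg_join (E 2) B3)"
    using B(2) by (simp add: off_points_def subset_pg_joinI)
  moreover have "B1 \<subseteq> ?T" by (simp add: subset_pg_joinI)
  ultimately show ?thesis by blast
qed

lemma dim_Int_join_le:
  assumes "pg_point B"
  shows "vec.dim (E 1 \<inter> pg_join P2 (pg_join (E 2) B)) \<le> 2"
proof -
  let ?Z = "pg_join P2 (pg_join (E 2) B)"
  have B: "vec.subspace B" "vec.dim B = 1" using assms by (simp_all add: proj_subspace_def)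
  have "vec.dim (pg_join (E 2) B) \<le> 4"
    using dim_pg_join_add_dim_Int[OF subspace_E[of 2] B(1)] dim_E[of 2] B(2) by simp
  then have "vec.dim ?Z \<le> 5"
    using dim_pg_join_add_dim_Int[OF _ subspace_pg_join, of P2 "E 2" B] P2
    by (simp add: proj_subspace_def)
  have "vec.dim (pg_join (E 1) (E 2)) = 5"
    using dim_pg_join_add_dim_Int[OF subspace_E subspace_E, of 1 2] dim_E planes_meet[of 1 2] P1
    by (simp add: proj_subspace_def)
  then have "vec.dim (pg_join P2 (pg_join (E 1) (E 2))) = 6"
    using dim_pg_join_point[OF P2 subspace_pg_join P2_off_joins[of 1 2]] by simp
  moreover have "pg_join P2 (pg_join (E 1) (E 2)) \<subseteq> pg_join (E 1) ?Z"
    by (simp add: subset_pg_joinI)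
  ultimately have "6 \<le> vec.dim (pg_join (E 1) ?Z)" by (metis vec.dim_subset)
  then show ?thesis
    using dim_pg_join_add_dim_Int[OF subspace_E[of 1] subspace_pg_join, of P2 "pg_join (E 2) B"]
      \<open>vec.dim ?Z \<le> 5\<close> dim_E[of 1] by simp
qed

lemma card_points_Int_join_le:
  assumes "pg_point B"
  shows "card (subspaces_of_dim 1 (E 1 \<inter> pg_join P2 (pg_join (E 2) B)) - {P1}) \<le> CARD('a)"
proof -
  let ?W = "E 1 \<inter> pg_join P2 (pg_join (E 2) B)"
  have W: "vec.subspace ?W" "vec.dim ?W \<le> 2"
    using dim_Int_join_le[OF assms] subspace_E[of 1] by (auto simp: vec.subspace_inter)
  have "P1 \<subseteq> ?W" using P1_subset_E[of 1] P1_subset_E[of 2] by (simp add: subset_pg_joinI)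
  then have "P1 \<in> subspaces_of_dim 1 ?W"
    using P1 by (simp add: subspaces_of_dim_def proj_subspace_def)
  moreover have "card (subspaces_of_dim 1 ?W) \<le> (\<Sum>i<2. CARD('a) ^ i)"
    unfolding card_points[OF W(1)] by (rule sum_mono2) (use W(2) in auto)
  ultimately show ?thesis by (simp add: card_Diff_singleton numeral_2_eq_2)
qed

text \<open>A degenerate triple is determined by B3 and B1, and B1 ranges over the points
  other than P1 of E1 \<inter> \<langle>P2, E2, B3\<rangle>.\<close>
lemma card_degenerate_le: "card degenerate \<le> (CARD('a)^2 + CARD('a)) * CARD('a)"
proof -
  define W where "W B = E 1 \<inter> pg_join P2 (pg_join (E 2) B)" for B
  define h :: "('a ^ 7) set \<times> ('a ^ 7) set \<times> ('a ^ 7) set \<Rightarrow> ('a ^ 7) set \<times> ('a ^ 7) set"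
    where "h = (\<lambda>(B1, B2, B3). (B3, B1))"
  have "inj_on h degenerate"
    by (rule inj_onI) (auto simp: h_def dest: degenerate_determined)
  moreover have "h ` degenerate \<subseteq> Sigma (off_points 3) (\<lambda>B. subspaces_of_dim 1 (W B) - {P1})"
  proof (rule image_subsetI)
    fix t assume "t \<in> degenerate"
    moreover obtain B1 B2 B3 where t: "t = (B1, B2, B3)" by (cases t)
    ultimately have deg: "(B1, B2, B3) \<in> degenerate" by simp
    then have "B1 \<in> off_points 1" "B3 \<in> off_points 3"
      by (auto simp: degenerate_def triples_def)
    moreover have "B1 \<subseteq> W B3" using degenerate_first_in_join[OF deg] \<open>B1 \<in> off_points 1\<close>
      by (simp add: W_def off_points_def)
    ultimately show "h t \<in> Sigma (off_points 3) (\<lambda>B. subspaces_of_dim 1 (W B) - {P1})"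
      by (simp add: t h_def off_points_def subspaces_of_dim_def proj_subspace_def)
  qed
  ultimately have
    "card degenerate \<le> card (Sigma (off_points 3) (\<lambda>B. subspaces_of_dim 1 (W B) - {P1}))"
    using card_inj_on_le finite by blast
  also have "\<dots> = (\<Sum>B\<in>off_points 3. card (subspaces_of_dim 1 (W B) - {P1}))"
    by (simp add: card_SigmaI)
  also have "\<dots> \<le> card (off_points 3) * CARD('a)"
    using sum_mono[of "off_points 3" _ "\<lambda>_. CARD('a)"] card_points_Int_join_le
    by (fastforce simp: W_def off_points_def)
  finally show ?thesis using card_off_points[of 3] by simp
qed

definition solids_over :: "('a ^ 7) set \<times> ('a ^ 7) set \<times> ('a ^ 7) set \<Rightarrow> ('a ^ 7) set set" where
  "solids_over = (\<lambda>(B1, B2, B3). {S. pg_solid S \<and> pg_join P2 (pg_join B1 B2) \<subseteq> S \<and> B3 \<subseteq> S})"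

lemma solids_avoiding_P1_subset:
  "{S. pg_solid S \<and> P2 \<subseteq> S \<and> (\<forall>i\<in>{1,2,3}. pg_meet S (E i)) \<and> \<not> P1 \<subseteq> S}
    \<subseteq> (\<Union>t\<in>triples. solids_over t)"
proof
  fix S assume "S \<in> {S. pg_solid S \<and> P2 \<subseteq> S \<and> (\<forall>i\<in>{1,2,3}. pg_meet S (E i)) \<and> \<not> P1 \<subseteq> S}"
  then have S: "pg_solid S" "P2 \<subseteq> S" "\<And>i. i \<in> {1,2,3} \<Longrightarrow> pg_meet S (E i)" "\<not> P1 \<subseteq> S"
    by auto
  have "\<exists>B \<in> off_points i. B \<subseteq> S" if i: "i \<in> {1,2,3}" for i
  proof -
    obtain B where "pg_point B" "B \<subseteq> S" "B \<subseteq> E i"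
      using pg_meet_obtain_point[OF _ subspace_E[OF i] S(3)[OF i]] S(1)
      by (auto simp: proj_subspace_def)
    then show ?thesis using S(4) by (auto simp: off_points_def)
  qed
  then obtain B1 B2 B3 where B: "B1 \<in> off_points 1" "B2 \<in> off_points 2" "B3 \<in> off_points 3"
    and "B1 \<subseteq> S" "B2 \<subseteq> S" "B3 \<subseteq> S"
    by (meson insertI1 insertI2)
  then have "S \<in> solids_over (B1, B2, B3)"
    using S(1,2) by (simp add: solids_over_def proj_subspace_def)
  moreover have "(B1, B2, B3) \<in> triples" using B by (simp add: triples_def)
  ultimately show "S \<in> (\<Union>t\<in>triples. solids_over t)" by blast
qed

lemma card_solids_over_le:
  assumes "t \<in> triples"
  shows "card (solids_over t)
    \<le> 1 + (if t \<in> degenerate then CARD('a)^3 + CARD('a)^2 + CARD('a) else 0)"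
proof -
  obtain B1 B2 B3 where t: "t = (B1, B2, B3)" by (cases t)
  let ?T = "pg_join P2 (pg_join B1 B2)"
  have T: "pg_plane ?T" using join_off_points_plane[of 1 2 B1 B2] assms t by (simp add: triples_def)
  show ?thesis
  proof (cases "t \<in> degenerate")
    case True
    have "solids_over t \<subseteq> {S. pg_solid S \<and> ?T \<subseteq> S}" by (simp add: t solids_over_def Collect_mono)
    then have "card (solids_over t) \<le> card {S. pg_solid S \<and> ?T \<subseteq> S}" by (rule card_mono[OF finite])
    then show ?thesis using card_solids_through_plane[OF T] True by simp
  next
    case False
    then have "\<not> B3 \<subseteq> ?T" using assms t by (simp add: degenerate_def)
    moreover have "pg_point B3" using assms t by (simp add: triples_def off_points_def)
    ultimately have "solids_over t \<subseteq> {pg_join B3 ?T}"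
      using pg_solid_eq_join[OF _ T] by (auto simp: t solids_over_def)
    then have "card (solids_over t) \<le> card {pg_join B3 ?T}" by (rule card_mono[OF finite])
    then show ?thesis using False by simp
  qed
qed

lemma card_solids_avoiding_P1_le:
  "card {S. pg_solid S \<and> P2 \<subseteq> S \<and> (\<forall>i\<in>{1,2,3}. pg_meet S (E i)) \<and> \<not> P1 \<subseteq> S}
    \<le> card triples + card degenerate * (CARD('a)^3 + CARD('a)^2 + CARD('a))"
proof -
  let ?c = "CARD('a)^3 + CARD('a)^2 + CARD('a)"
  have "card {S. pg_solid S \<and> P2 \<subseteq> S \<and> (\<forall>i\<in>{1,2,3}. pg_meet S (E i)) \<and> \<not> P1 \<subseteq> S}
      \<le> card (\<Union>t\<in>triples. solids_over t)"
    by (rule card_mono[OF finite solids_avoiding_P1_subset])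
  also have "\<dots> \<le> (\<Sum>t\<in>triples. card (solids_over t))" by (rule card_UN_le) simp
  also have "\<dots> \<le> (\<Sum>t\<in>triples. 1 + (if t \<in> degenerate then ?c else 0))"
    by (rule sum_mono) (rule card_solids_over_le)
  also have "\<dots> = card triples + (\<Sum>t\<in>triples. if t \<in> degenerate then ?c else 0)"
    by (subst sum.distrib) simp
  also have "(\<Sum>t\<in>triples. if t \<in> degenerate then ?c else 0) = card degenerate * ?c"
    using sum.inter_restrict[of triples "\<lambda>_. ?c" degenerate, symmetric]
      Int_absorb1[of degenerate triples]
    by (simp add: degenerate_def subset_iff)
  finally show ?thesis .
qed

end

theorem lemma4p2:
  fixes P1 P2 :: "('a::{finite,field} ^ 7) set"
    and E :: "nat \<Rightarrow> ('a ^ 7) set"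
  assumes "pg_point P1" and "pg_point P2" and "P1 \<noteq> P2"
    and "\<And>i. i \<in> {1,2,3} \<Longrightarrow> pg_plane (E i)"
    and "\<And>i j. i \<in> {1,2,3} \<Longrightarrow> j \<in> {1,2,3} \<Longrightarrow> i \<noteq> j \<Longrightarrow> E i \<inter> E j = P1"
    and "\<And>i j. i \<in> {1,2,3} \<Longrightarrow> j \<in> {1,2,3} \<Longrightarrow> i \<noteq> j \<Longrightarrow> \<not> P2 \<subseteq> pg_join (E i) (E j)"
  shows "card {S. pg_solid S \<and> P2 \<subseteq> S \<and> (\<forall>i\<in>{1,2,3}. pg_meet S (E i))}
     \<le> 3 * CARD('a)^6 + 6 * CARD('a)^5 + 7 * CARD('a)^4 + 4 * CARD('a)^3
        + 2 * CARD('a)^2 + CARD('a) + 1"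
proof -
  interpret three_planes P1 P2 E using assms(1,2,4-6) by (rule three_planes.intro)
  let ?q = "CARD('a)"
  have "{S. pg_solid S \<and> P2 \<subseteq> S \<and> (\<forall>i\<in>{1,2,3}. pg_meet S (E i))}
      \<subseteq> {S. pg_solid S \<and> P1 \<subseteq> S \<and> P2 \<subseteq> S}
        \<union> {S. pg_solid S \<and> P2 \<subseteq> S \<and> (\<forall>i\<in>{1,2,3}. pg_meet S (E i)) \<and> \<not> P1 \<subseteq> S}"
    by blast
  then have "card {S. pg_solid S \<and> P2 \<subseteq> S \<and> (\<forall>i\<in>{1,2,3}. pg_meet S (E i))}
      \<le> card {S. pg_solid S \<and> P1 \<subseteq> S \<and> P2 \<subseteq> S}
        + card {S. pg_solid S \<and> P2 \<subseteq> S \<and> (\<forall>i\<in>{1,2,3}. pg_meet S (E i)) \<and> \<not> P1 \<subseteq> S}"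
    by (meson card_Un_le card_mono finite order_trans)
  also have "\<dots> \<le> (?q^6 + ?q^5 + 2 * ?q^4 + 2 * ?q^3 + 2 * ?q^2 + ?q + 1)
      + ((?q^2 + ?q)^3 + (?q^2 + ?q) * ?q * (?q^3 + ?q^2 + ?q))"
    using card_solids_through_points[OF assms(1-3)] card_solids_avoiding_P1_le card_triples
      mult_right_mono[OF card_degenerate_le, of "?q^3 + ?q^2 + ?q"]
    by linarith
  also have "\<dots> = 3 * ?q^6 + 6 * ?q^5 + 7 * ?q^4 + 4 * ?q^3 + 2 * ?q^2 + ?q + 1"
    by algebra
  finally show ?thesis .
qed

end
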